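(* Let $G=\langle V,E\rangle$ be a DAG and let $E_1\subseteq E$ be such that $G$ has no $E_1$-shortcuts. Then for every topological sorting $\tau$ of $G$, $$|V|-|\pi^{E_1}_\tau| = |E_1|-\sum_{P_1,P_2\in\pi^{E_1}_\tau,\ P_1\neq P_2}|P_1\to_{E_1}P_2|.$$
   Context: A DAG is a finite directed acyclic graph. A topological sorting of $G$ is a bijection $\tau:V\to\{1,\dots,|V|\}$ with $\tau(u)<\tau(v)$ for every arc $\langle u,v\rangle\in E$. A path $\langle u_1,\dots,u_n\rangle$ ($n\ge1$) is an $E_1$-path if $\langle u_i,u_{i+1}\rangle\in E_1$ for all $i<n$; its length is $n-1$. An arc $\langle v,u\rangle\in E_1$ is an $E_1$-shortcut if there is an $E_1$-path from $v$ to $u$ of length at least $2$. An $E_1$-path $\langle u_1,\dots,u_n\rangle$ is a $\tau,E_1$-path if $\tau(u_{i+1})=\tau(u_i)+1$ for all $i<n$; it is maximal if its vertex set is not contained in the vertex set of any other $\tau,E_1$-path. $\pi^{E_1}_\tau$ denotes the set of vertex sets of maximal $\tau,E_1$-paths. For $V_1,V_2\subseteq V$, $V_1\to_{E_1}V_2=\{\langle v_1,v_2\rangle\in E_1:v_1\in V_1,v_2\in V_2\}$. *)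

theory Defs
  imports Main
begin

definition dag :: "'a set \<Rightarrow> ('a \<times> 'a) set \<Rightarrow> bool" where
  "dag V E \<longleftrightarrow> finite V \<and> E \<subseteq> V \<times> V \<and> acyclic E"

definition topsort :: "'a set \<Rightarrow> ('a \<times> 'a) set \<Rightarrow> ('a \<Rightarrow> nat) \<Rightarrow> bool" where
  "topsort V E \<tau> \<longleftrightarrow> bij_betw \<tau> V {1..card V} \<and> (\<forall>(u,v)\<in>E. \<tau> u < \<tau> v)"

text \<open>An E1-path (as a nonempty list of vertices of V); its length is length - 1.\<close>
definition is_path :: "'a set \<Rightarrow> ('a \<times> 'a) set \<Rightarrow> 'a list \<Rightarrow> bool" where
  "is_path V E1 p \<longleftrightarrow> p \<noteq> [] \<and> set p \<subseteq> V \<and>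
     (\<forall>i. Suc i < length p \<longrightarrow> (p ! i, p ! Suc i) \<in> E1)"

definition is_shortcut :: "'a set \<Rightarrow> ('a \<times> 'a) set \<Rightarrow> 'a \<times> 'a \<Rightarrow> bool" where
  "is_shortcut V E1 a \<longleftrightarrow> a \<in> E1 \<and>
     (\<exists>p. is_path V E1 p \<and> hd p = fst a \<and> last p = snd a \<and> length p - 1 \<ge> 2)"

definition tau_path :: "'a set \<Rightarrow> ('a \<times> 'a) set \<Rightarrow> ('a \<Rightarrow> nat) \<Rightarrow> 'a list \<Rightarrow> bool" where
  "tau_path V E1 \<tau> p \<longleftrightarrow> is_path V E1 p \<and>
     (\<forall>i. Suc i < length p \<longrightarrow> \<tau> (p ! Suc i) = \<tau> (p ! i) + 1)"

definition max_tau_path :: "'a set \<Rightarrow> ('a \<times> 'a) set \<Rightarrow> ('a \<Rightarrow> nat) \<Rightarrow> 'a list \<Rightarrow> bool" where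
  "max_tau_path V E1 \<tau> p \<longleftrightarrow> tau_path V E1 \<tau> p \<and>
     \<not> (\<exists>q. tau_path V E1 \<tau> q \<and> set p \<subset> set q)"

definition pi_part :: "'a set \<Rightarrow> ('a \<times> 'a) set \<Rightarrow> ('a \<Rightarrow> nat) \<Rightarrow> 'a set set" where
  "pi_part V E1 \<tau> = {set p | p. max_tau_path V E1 \<tau> p}"

definition arcs_between :: "('a \<times> 'a) set \<Rightarrow> 'a set \<Rightarrow> 'a set \<Rightarrow> ('a \<times> 'a) set" where
  "arcs_between E1 V1 V2 = {(v1, v2) \<in> E1. v1 \<in> V1 \<and> v2 \<in> V2}"

end

theory Submission
  imports Defs "HOL-Library.Disjoint_Sets"
begin

text \<open>A \<open>\<tau>,E1\<close>-path visits consecutive positions of the numbering \<open>\<tau>\<close>, so it is the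
image of an interval of positions whose neighbours are joined by \<open>E1\<close>-arcs, and the maximal
ones partition \<open>V\<close>. Inside a block, an \<open>E1\<close>-arc that skips a position would be a shortcut
along the block's own path, so a block \<open>P\<close> carries exactly \<open>|P| - 1\<close> arcs of \<open>E1\<close>.
Counting \<open>E1\<close> over pairs of blocks then gives
\<open>|E1| = \<Sum>(|P| - 1) + (arcs between distinct blocks) = |V| - |\<pi>| + (arcs between distinct blocks)\<close>.\<close>

lemma card_eq_sum_arcs_between:
  assumes "finite V" and "E1 \<subseteq> V \<times> V" and \<P>: "partition_on V \<P>"
  shows "card E1 = (\<Sum>(P, Q) \<in> \<P> \<times> \<P>. card (arcs_between E1 P Q))"
proof -
  let ?A = "\<lambda>(P, Q). arcs_between E1 P Q"
  have "E1 = \<Union> (?A ` (\<P> \<times> \<P>))"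
    using assms(2) partition_onD1[OF \<P>] by (auto simp: arcs_between_def)
  moreover have "card (\<Union> (?A ` (\<P> \<times> \<P>))) = (\<Sum>x \<in> \<P> \<times> \<P>. card (?A x))"
  proof (rule card_UN_disjoint)
    show "finite (\<P> \<times> \<P>)" using finite_elements[OF assms(1) \<P>] by simp
    have "finite E1" using assms(1,2) finite_subset by blast
    then show "\<forall>x\<in>\<P> \<times> \<P>. finite (?A x)"
      by (auto simp: arcs_between_def intro: finite_subset[of _ E1])
    show "\<forall>x\<in>\<P> \<times> \<P>. \<forall>y\<in>\<P> \<times> \<P>. x \<noteq> y \<longrightarrow> ?A x \<inter> ?A y = {}"
      using disjointD[OF partition_onD2[OF \<P>]] by (fastforce simp: arcs_between_def)
  qed
  ultimately show ?thesis by (simp add: case_prod_unfold)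
qed

lemma sum_square_split_diagonal:
  assumes "finite A"
  shows "(\<Sum>(x, y) \<in> A \<times> A. f x y) =
    (\<Sum>x\<in>A. f x x) + (\<Sum>(x, y) \<in> {(x, y). x \<in> A \<and> y \<in> A \<and> x \<noteq> y}. f x y)"
proof -
  let ?D = "(\<lambda>x. (x, x)) ` A" and ?O = "{(x, y). x \<in> A \<and> y \<in> A \<and> x \<noteq> y}"
  have split: "A \<times> A = ?D \<union> ?O" by auto
  have "finite ?O" using assms by (auto intro: finite_subset[of _ "A \<times> A"])
  then have "(\<Sum>(x, y) \<in> A \<times> A. f x y) = (\<Sum>(x, y) \<in> ?D. f x y) + (\<Sum>(x, y) \<in> ?O. f x y)"
    using assms unfolding split by (intro sum.union_disjoint) auto
  also have "(\<Sum>(x, y) \<in> ?D. f x y) = (\<Sum>x\<in>A. f x x)"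
    by (simp add: sum.reindex inj_on_def)
  finally show ?thesis .
qed

lemma card_diff_card_partition_arcs:
  assumes "finite V" and "E1 \<subseteq> V \<times> V" and \<P>: "partition_on V \<P>"
    and within: "\<And>P. P \<in> \<P> \<Longrightarrow> card (arcs_between E1 P P) + 1 = card P"
  shows "int (card V) - int (card \<P>) =
         int (card E1) -
         (\<Sum>(P1, P2) \<in> {(P1, P2). P1 \<in> \<P> \<and> P2 \<in> \<P> \<and> P1 \<noteq> P2}.
            int (card (arcs_between E1 P1 P2)))"
proof -
  have fin: "finite \<P>" using finite_elements[OF assms(1) \<P>] .
  have "card V = (\<Sum>P\<in>\<P>. card P)"
    using \<P> assms(1) card_Union_disjoint[of \<P>]
    by (metis partition_onD1 partition_onD2 Union_upper finite_subset)
  then have "int (card V) - int (card \<P>) = (\<Sum>P\<in>\<P>. int (card P) - 1)"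
    by (simp add: sum_subtractf)
  also have "\<dots> = (\<Sum>P\<in>\<P>. int (card (arcs_between E1 P P)))"
    by (intro sum.cong refl) (simp add: within[symmetric])
  finally have "int (card V) - int (card \<P>) = (\<Sum>P\<in>\<P>. int (card (arcs_between E1 P P)))" .
  moreover have "int (card E1) = (\<Sum>(P1, P2) \<in> \<P> \<times> \<P>. int (card (arcs_between E1 P1 P2)))"
    unfolding card_eq_sum_arcs_between[OF assms(1-3)] of_nat_sum by (simp add: case_prod_unfold)
  ultimately show ?thesis
    using sum_square_split_diagonal[OF fin, of "\<lambda>P1 P2. int (card (arcs_between E1 P1 P2))"]
    by simp
qed

locale topological_numbering =
  fixes V :: "'a set" and E1 :: "('a \<times> 'a) set" and \<tau> :: "'a \<Rightarrow> nat"
  assumes bij: "bij_betw \<tau> V {1..card V}"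
    and arcs_in: "E1 \<subseteq> V \<times> V"
    and arc_increasing: "(u, v) \<in> E1 \<Longrightarrow> \<tau> u < \<tau> v"
begin

abbreviation vertex_at :: "nat \<Rightarrow> 'a" where
  "vertex_at \<equiv> the_inv_into V \<tau>"

lemma finite_V: "finite V"
  using bij_betw_finite[OF bij] by simp

lemma vertex_at_in: "i \<in> {1..card V} \<Longrightarrow> vertex_at i \<in> V"
  using bij_betw_the_inv_into[OF bij] by (auto simp: bij_betw_def)

lemma tau_vertex_at: "i \<in> {1..card V} \<Longrightarrow> \<tau> (vertex_at i) = i"
  using f_the_inv_into_f_bij_betw[OF bij] by auto

lemma vertex_at_tau: "v \<in> V \<Longrightarrow> vertex_at (\<tau> v) = v"
  using bij by (simp add: bij_betw_def the_inv_into_f_f)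

lemma tau_in: "v \<in> V \<Longrightarrow> \<tau> v \<in> {1..card V}"
  using bij by (auto simp: bij_betw_def)

lemma inj_on_vertex_at: "inj_on vertex_at {1..card V}"
  using bij_betw_the_inv_into[OF bij] by (auto simp: bij_betw_def)

definition run :: "nat \<Rightarrow> nat \<Rightarrow> bool" where
  "run a b \<longleftrightarrow> 1 \<le> a \<and> a < b \<and> b \<le> card V + 1 \<and>
     (\<forall>i. a \<le> i \<and> Suc i < b \<longrightarrow> (vertex_at i, vertex_at (Suc i)) \<in> E1)"

lemma run_range: "run a b \<Longrightarrow> {a..<b} \<subseteq> {1..card V}"
  unfolding run_def by auto

lemma run_sub:
  "run a b \<Longrightarrow> a \<le> c \<Longrightarrow> c < d \<Longrightarrow> d \<le> b \<Longrightarrow> run c d"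
  unfolding run_def by auto

lemma run_union:
  assumes "run a b" and "run c d" and "a < d" and "c < b"
  shows "run (min a c) (max b d)"
  unfolding run_def
proof (intro conjI allI impI)
  fix i assume i: "min a c \<le> i \<and> Suc i < max b d"
  then have "a \<le> i \<and> Suc i < b \<or> c \<le> i \<and> Suc i < d" using assms(3,4) by auto
  then show "(vertex_at i, vertex_at (Suc i)) \<in> E1" using assms(1,2) by (auto simp: run_def)
qed (use assms in \<open>auto simp: run_def\<close>)

lemma tau_path_iff_run:
  "tau_path V E1 \<tau> p \<longleftrightarrow> (\<exists>a b. run a b \<and> p = map vertex_at [a..<b])"
proof
  assume path: "tau_path V E1 \<tau> p"
  let ?a = "\<tau> (hd p)"
  have ne: "p \<noteq> []" and inV: "\<And>i. i < length p \<Longrightarrow> p ! i \<in> V"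
    and arc: "\<And>i. Suc i < length p \<Longrightarrow> (p ! i, p ! Suc i) \<in> E1"
    and step: "\<And>i. Suc i < length p \<Longrightarrow> \<tau> (p ! Suc i) = \<tau> (p ! i) + 1"
    using path by (auto simp: tau_path_def is_path_def)
  have tau_nth: "i < length p \<Longrightarrow> \<tau> (p ! i) = ?a + i" for i
    by (induction i) (use ne step in \<open>auto simp: hd_conv_nth\<close>)
  have nth: "i < length p \<Longrightarrow> p ! i = vertex_at (?a + i)" for i
    using vertex_at_tau[OF inV] tau_nth by metis
  have "run ?a (?a + length p)"
    unfolding run_def
  proof (intro conjI allI impI)
    show "1 \<le> ?a" using tau_in[OF inV[of 0]] ne tau_nth[of 0] by auto
    show "?a + length p \<le> card V + 1"
      using tau_in[OF inV[of "length p - 1"]] ne tau_nth[of "length p - 1"] by auto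
    fix i assume i: "?a \<le> i \<and> Suc i < ?a + length p"
    then have "Suc (i - ?a) < length p" by linarith
    then show "(vertex_at i, vertex_at (Suc i)) \<in> E1"
      using i arc[of "i - ?a"] nth[of "i - ?a"] nth[of "Suc (i - ?a)"] by (simp add: Suc_diff_le)
  qed (use ne in simp)
  moreover have "p = map vertex_at [?a..<?a + length p]"
    by (rule nth_equalityI) (auto simp: nth)
  ultimately show "\<exists>a b. run a b \<and> p = map vertex_at [a..<b]" by blast
next
  assume "\<exists>a b. run a b \<and> p = map vertex_at [a..<b]"
  then obtain a b where run: "run a b" and p: "p = map vertex_at [a..<b]" by blast
  then have range: "{a..<b} \<subseteq> {1..card V}" by (auto simp: run_def)
  show "tau_path V E1 \<tau> p"
    unfolding tau_path_def is_path_def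
  proof (intro conjI allI impI)
    show "p \<noteq> []" and "set p \<subseteq> V"
      using run range vertex_at_in by (auto simp: p run_def)
    fix i assume "Suc i < length p"
    then have i: "Suc (a + i) < b" by (simp add: p)
    then show "(p ! i, p ! Suc i) \<in> E1"
      using run by (simp add: p run_def)
    have "a + i \<in> {1..card V}" and "Suc (a + i) \<in> {1..card V}"
      using i run by (auto simp: run_def)
    then show "\<tau> (p ! Suc i) = \<tau> (p ! i) + 1"
      using i by (simp add: p tau_vertex_at)
  qed
qed

lemma pi_part_run:
  assumes "P \<in> pi_part V E1 \<tau>"
  obtains a b where "run a b" and "P = vertex_at ` {a..<b}"
proof -
  obtain p where "tau_path V E1 \<tau> p" and "P = set p"
    using assms by (auto simp: pi_part_def max_tau_path_def)
  then show thesis using that by (auto simp: tau_path_iff_run)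
qed

lemma pi_part_maximal:
  assumes "P \<in> pi_part V E1 \<tau>" and "run c d" and "P \<subseteq> vertex_at ` {c..<d}"
  shows "P = vertex_at ` {c..<d}"
proof -
  obtain p where max: "max_tau_path V E1 \<tau> p" and P: "P = set p"
    using assms(1) by (auto simp: pi_part_def)
  have "tau_path V E1 \<tau> (map vertex_at [c..<d])"
    using assms(2) tau_path_iff_run by blast
  then have "\<not> set p \<subset> vertex_at ` {c..<d}"
    using max unfolding max_tau_path_def by (metis set_map set_upt)
  then show ?thesis using assms(3) P by blast
qed

lemma pi_part_subset: "P \<in> pi_part V E1 \<tau> \<Longrightarrow> P \<subseteq> V"
  by (elim pi_part_run) (use run_range vertex_at_in in blast)

lemma pi_part_eq_if_meet:
  assumes P: "P \<in> pi_part V E1 \<tau>" and Q: "Q \<in> pi_part V E1 \<tau>" and "x \<in> P" and "x \<in> Q"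
  shows "P = Q"
proof -
  obtain a b where ab: "run a b" "P = vertex_at ` {a..<b}" using pi_part_run[OF P] .
  obtain c d where cd: "run c d" "Q = vertex_at ` {c..<d}" using pi_part_run[OF Q] .
  obtain i j where i: "i \<in> {a..<b}" and j: "j \<in> {c..<d}" and ij: "vertex_at i = vertex_at j"
    using ab(2) cd(2) \<open>x \<in> P\<close> \<open>x \<in> Q\<close> by blast
  have "i = j"
    using inj_onD[OF inj_on_vertex_at ij] i j run_range[OF ab(1)] run_range[OF cd(1)] by blast
  then have union: "run (min a c) (max b d)"
    using i j by (intro run_union[OF ab(1) cd(1)]) auto
  have "P \<subseteq> vertex_at ` {min a c..<max b d}" unfolding ab(2) by (rule image_mono) auto
  then have "P = vertex_at ` {min a c..<max b d}" by (rule pi_part_maximal[OF P union])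
  moreover have "Q \<subseteq> vertex_at ` {min a c..<max b d}" unfolding cd(2) by (rule image_mono) auto
  then have "Q = vertex_at ` {min a c..<max b d}" by (rule pi_part_maximal[OF Q union])
  ultimately show ?thesis by simp
qed

lemma pi_part_cover:
  assumes "v \<in> V"
  shows "\<exists>P \<in> pi_part V E1 \<tau>. v \<in> P"
proof -
  let ?S = "{set p | p. tau_path V E1 \<tau> p \<and> v \<in> set p}"
  have "?S \<subseteq> Pow V" by (auto simp: tau_path_def is_path_def)
  then have "finite ?S" by (rule finite_subset) (simp add: finite_V)
  moreover have "{v} \<in> ?S"
    using assms by (auto simp: tau_path_def is_path_def intro!: exI[of _ "[v]"])
  ultimately obtain P where "P \<in> ?S" and maximal: "\<forall>Q \<in> ?S. P \<subseteq> Q \<longrightarrow> P = Q"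
    using finite_has_maximal[of ?S] by blast
  then obtain p where p: "tau_path V E1 \<tau> p" "v \<in> set p" "P = set p" by blast
  have "\<not> set p \<subset> set q" if "tau_path V E1 \<tau> q" for q
  proof
    assume "set p \<subset> set q"
    then have "set q \<in> ?S" using that p(2) by blast
    then show False using maximal p(3) \<open>set p \<subset> set q\<close> by blast
  qed
  then have "max_tau_path V E1 \<tau> p"
    unfolding max_tau_path_def using p(1) by blast
  then show ?thesis using p by (auto simp: pi_part_def)
qed

lemma partition_on_pi_part: "partition_on V (pi_part V E1 \<tau>)"
proof (rule partition_onI)
  show "\<Union> (pi_part V E1 \<tau>) = V" using pi_part_subset pi_part_cover by blast
  show "disjnt P Q" if "P \<in> pi_part V E1 \<tau>" "Q \<in> pi_part V E1 \<tau>" "P \<noteq> Q" for P Q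
    using pi_part_eq_if_meet[OF that(1,2)] that(3) by (auto simp: disjnt_def)
  show "{} \<notin> pi_part V E1 \<tau>"
  proof
    assume "{} \<in> pi_part V E1 \<tau>"
    then obtain a b where "run a b" "{} = vertex_at ` {a..<b}" by (rule pi_part_run)
    then show False by (simp add: run_def)
  qed
qed

lemma arc_within_run_consecutive:
  assumes no_shortcut: "\<not> (\<exists>e. is_shortcut V E1 e)" and run: "run a b"
    and i: "i \<in> {a..<b}" and j: "j \<in> {a..<b}" and arc: "(vertex_at i, vertex_at j) \<in> E1"
  shows "j = Suc i"
proof (rule ccontr)
  assume "j \<noteq> Suc i"
  moreover have "i < j"
    using arc_increasing[OF arc] run_range[OF run] i j by (simp add: subset_iff tau_vertex_at)
  ultimately have long: "Suc i < j" by simp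
  let ?p = "map vertex_at [i..<Suc j]"
  have "run i (Suc j)" using i j long by (intro run_sub[OF run]) auto
  then have "is_path V E1 ?p" using tau_path_iff_run tau_path_def by blast
  moreover have "hd ?p = vertex_at i" and "last ?p = vertex_at j" and "length ?p - 1 \<ge> 2"
    using long by (simp_all add: hd_map last_map upt_conv_Cons)
  ultimately have "is_shortcut V E1 (vertex_at i, vertex_at j)"
    unfolding is_shortcut_def using arc by auto
  then show False using no_shortcut by blast
qed

lemma card_arcs_within_pi_part:
  assumes no_shortcut: "\<not> (\<exists>e. is_shortcut V E1 e)" and P: "P \<in> pi_part V E1 \<tau>"
  shows "card (arcs_between E1 P P) + 1 = card P"
proof -
  obtain a b where run: "run a b" and P_eq: "P = vertex_at ` {a..<b}" using pi_part_run[OF P] .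
  let ?step = "\<lambda>i. (vertex_at i, vertex_at (Suc i))"
  have inj: "inj_on vertex_at {a..<b}"
    using inj_on_subset[OF inj_on_vertex_at run_range[OF run]] .
  have "arcs_between E1 P P = ?step ` {a..<b - 1}"
  proof
    show "arcs_between E1 P P \<subseteq> ?step ` {a..<b - 1}"
    proof
      fix e assume "e \<in> arcs_between E1 P P"
      then obtain i j where i: "i \<in> {a..<b}" and j: "j \<in> {a..<b}"
        and e: "e = (vertex_at i, vertex_at j)" and arc: "e \<in> E1"
        by (auto simp: P_eq arcs_between_def)
      have "j = Suc i" using arc_within_run_consecutive[OF no_shortcut run i j] arc e by simp
      then show "e \<in> ?step ` {a..<b - 1}" using i j e by auto
    qed
    show "?step ` {a..<b - 1} \<subseteq> arcs_between E1 P P"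
      using run by (auto simp: P_eq arcs_between_def run_def)
  qed
  moreover have "inj_on ?step {a..<b - 1}"
    using inj by (auto simp: inj_on_def)
  ultimately have "card (arcs_between E1 P P) = b - 1 - a" by (simp add: card_image)
  moreover have "card P = b - a" using inj by (simp add: P_eq card_image)
  ultimately show ?thesis using run unfolding run_def by arith
qed

end

theorem lemma3p1:
  fixes V :: "'a set" and E E1 :: "('a \<times> 'a) set" and \<tau> :: "'a \<Rightarrow> nat"
  assumes "dag V E"
    and "E1 \<subseteq> E"
    and "\<not> (\<exists>a. is_shortcut V E1 a)"
    and "topsort V E \<tau>"
  shows "int (card V) - int (card (pi_part V E1 \<tau>)) =
         int (card E1) -
         (\<Sum>(P1, P2) \<in> {(P1, P2). P1 \<in> pi_part V E1 \<tau> \<and> P2 \<in> pi_part V E1 \<tau> \<and> P1 \<noteq> P2}.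
            int (card (arcs_between E1 P1 P2)))"
proof -
  interpret topological_numbering V E1 \<tau>
    using assms(1,2,4) by unfold_locales (auto simp: dag_def topsort_def)
  show ?thesis
    using card_diff_card_partition_arcs[OF finite_V arcs_in partition_on_pi_part]
      card_arcs_within_pi_part[OF assms(3)] by blast
qed

end
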